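(* (1) Let $n,m\ge1$, let $A_1,\dots,A_m$ be invertible real $n\times n$ matrices and $B_1,\dots,B_m$ real matrices with $n$ rows, and consider the switched linear control system $x_k=A_{i_k}x_{k-1}+B_{i_k}u_k$, $k\ge1$. If this system is controllable, then there exists a controllable sequence of length $k\le \frac{n(n+1)}{2}$. (2) For all integers $n\ge1$ and $m\ge1$ there exist invertible real $n\times n$ matrices $A_1,\dots,A_m$ and real matrices $B_1,\dots,B_m$ with $n$ rows such that the corresponding switched linear control system is controllable and its shortest controllable sequences have length (a) $n+\frac{m(m-1)}{2}$ if $m\le n$; (b) $\frac{n(n+1)}{2}$ if $m>n$.
   Context: $\Sigma=\{1,\dots,m\}$, $\Sigma^*$ is the set of finite words over $\Sigma$. For $\pi=i_1\cdots i_k\in\Sigma^*$, $\mathcal{R}(\pi)=\mathrm{Im}(A_{i_k}\cdots A_{i_2}B_{i_1},\dots,A_{i_k}B_{i_{k-1}},B_{i_k})$ is the set of states reachable at time $k$ from $x_0=0$ with switching sequence $i_1,\dots,i_k$ and arbitrary inputs. A sequence $\pi$ is controllable if $\mathcal{R}(\pi)=\mathbb{R}^n$; its length is the number of symbols. The system is controllable if $\bigcup_{\pi\in\Sigma^*}\mathcal{R}(\pi)=\mathbb{R}^n$. *)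

theory Defs
  imports "Jordan_Normal_Form.Matrix"
begin

text \<open>Switched linear control system x_k = A_{i_k} x_{k-1} + B_{i_k} u_k on real^n.
  Modes are indexed 0..m-1 (instead of 1..m). A, B :: nat => real mat.\<close>

definition sys_ok :: "nat \<Rightarrow> nat \<Rightarrow> (nat \<Rightarrow> real mat) \<Rightarrow> (nat \<Rightarrow> real mat) \<Rightarrow> bool" where
  "sys_ok n m A B \<longleftrightarrow> n \<ge> 1 \<and> m \<ge> 1 \<and>
     (\<forall>i<m. A i \<in> carrier_mat n n \<and> invertible_mat (A i) \<and> dim_row (B i) = n)"

definition word :: "nat \<Rightarrow> nat list \<Rightarrow> bool" where
  "word m \<pi> \<longleftrightarrow> set \<pi> \<subseteq> {..<m}"

text \<open>Reachable set, on the reversed word (last applied mode first).\<close>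
fun reach_rev :: "(nat \<Rightarrow> real mat) \<Rightarrow> (nat \<Rightarrow> real mat) \<Rightarrow> nat \<Rightarrow> nat list \<Rightarrow> real vec set" where
  "reach_rev A B n [] = {0\<^sub>v n}"
| "reach_rev A B n (i # \<rho>) =
     {A i *\<^sub>v x + B i *\<^sub>v u | x u. x \<in> reach_rev A B n \<rho> \<and> u \<in> carrier_vec (dim_col (B i))}"

definition reach :: "(nat \<Rightarrow> real mat) \<Rightarrow> (nat \<Rightarrow> real mat) \<Rightarrow> nat \<Rightarrow> nat list \<Rightarrow> real vec set" where
  "reach A B n \<pi> = reach_rev A B n (rev \<pi>)"

definition controllable_seq :: "(nat \<Rightarrow> real mat) \<Rightarrow> (nat \<Rightarrow> real mat) \<Rightarrow> nat \<Rightarrow> nat list \<Rightarrow> bool" where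
  "controllable_seq A B n \<pi> \<longleftrightarrow> reach A B n \<pi> = carrier_vec n"

definition controllable_sys :: "(nat \<Rightarrow> real mat) \<Rightarrow> (nat \<Rightarrow> real mat) \<Rightarrow> nat \<Rightarrow> nat \<Rightarrow> bool" where
  "controllable_sys A B n m \<longleftrightarrow> (\<Union>\<pi>\<in>{\<pi>. word m \<pi>}. reach A B n \<pi>) = carrier_vec n"

definition shortest_ctrl_len :: "(nat \<Rightarrow> real mat) \<Rightarrow> (nat \<Rightarrow> real mat) \<Rightarrow> nat \<Rightarrow> nat \<Rightarrow> nat \<Rightarrow> bool" where
  "shortest_ctrl_len A B n m L \<longleftrightarrow>
     (\<exists>\<pi>. word m \<pi> \<and> controllable_seq A B n \<pi> \<and> length \<pi> = L) \<and>
     (\<forall>\<pi>. word m \<pi> \<and> controllable_seq A B n \<pi> \<longrightarrow> L \<le> length \<pi>)"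

end

(*
  Read words backwards, so that the reachable set R(rho @ tau) contains R(rho) and
  Phi_rho R(tau), where the transition map Phi_rho of rho is linear and injective.  If
  d = dim R(rho) < n, some tau of length at most d + 1 enlarges R(rho): otherwise Phi_rho maps
  the span W_(d+1) of all states reachable in at most d + 1 steps into R(rho), so
  dim W_(d+1) <= d; but the chain W_0 <= W_1 <= ... increases strictly until it is invariant
  under all modes, i.e. until it is all of R^n, so dim W_(d+1) >= d + 1.  Raising the
  dimension one step at a time thus costs at most 1 + 2 + ... + n letters.

  Put q = min m n and r = n - q + 1.  Mode 0 rotates the coordinates 0, ..., r - 1
  and feeds the input into coordinate 0; mode k = 1, ..., q - 1 swaps coordinates r + k - 2
  and r + k - 1 and has no input; the remaining modes repeat mode q - 1.  Reachable sets are
  coordinate subspaces.  Giving coordinate j the weight 1 if j < r and j + 2 - r otherwise,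
  one letter raises the total weight of the reachable coordinates by at most one, so every
  controllable word has length at least the total weight n + q (q - 1) / 2, and an explicit
  word attains it.
*)

theory Submission
  imports Defs "HOL-Library.Function_Algebras" "HOL-Combinatorics.Transposition"
begin

section \<open>Dimension inside a finite-dimensional subspace\<close>

context vector_space
begin

lemma dim_le_dim_if_subset_finite_span:
  assumes "X \<subseteq> Y" "Y \<subseteq> span E" "finite E"
  shows "dim X \<le> dim Y"
proof -
  obtain C where C: "C \<subseteq> Y" "independent C" "Y \<subseteq> span C" "card C = dim Y"
    using basis_exists by blast
  have "finite C"
    using independent_span_bound[OF assms(3) C(2)] C(1) assms(2) by blast
  then show ?thesis
    using dim_le_card[of X C] C assms(1) by auto
qed

lemma dim_less_dim_if_psubset_finite_span:
  assumes "subspace X" "X \<subset> Y" "Y \<subseteq> span E" "finite E"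
  shows "dim X < dim Y"
proof -
  obtain y where y: "y \<in> Y" "y \<notin> X"
    using assms(2) by blast
  obtain B where B: "B \<subseteq> X" "independent B" "X \<subseteq> span B" "card B = dim X"
    using basis_exists by blast
  obtain C where C: "C \<subseteq> Y" "independent C" "Y \<subseteq> span C" "card C = dim Y"
    using basis_exists by blast
  have "span B \<subseteq> X"
    using span_minimal[OF B(1) assms(1)] .
  then have y_B: "y \<notin> span B"
    using y(2) by blast
  have "finite C"
    using independent_span_bound[OF assms(4) C(2)] C(1) assms(3) by blast
  moreover have "insert y B \<subseteq> span C"
    using B(1) C(3) y(1) assms(2) by blast
  ultimately have "card (insert y B) \<le> card C"
    using independent_span_bound[OF _ independent_insertI[OF y_B B(2)]] by blast
  moreover have "finite B"
    using independent_span_bound[OF assms(4) B(2)] B(1) assms(2,3) by blast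
  moreover have "y \<notin> B"
    using y_B span_superset by blast
  ultimately show ?thesis
    using B(4) C(4) by simp
qed

end

context vector_space_pair
begin

lemma dim_image_eq_if_inj_on_span:
  assumes "Vector_Spaces.linear s1 s2 g" "inj_on g (vs1.span X)"
  shows "vs2.dim (g ` X) = vs1.dim X"
proof -
  obtain B where B: "B \<subseteq> X" "vs1.independent B" "X \<subseteq> vs1.span B" "card B = vs1.dim X"
    using vs1.basis_exists by blast
  have inj_B: "inj_on g (vs1.span B)"
    using inj_on_subset[OF assms(2) vs1.span_mono[OF B(1)]] .
  have "vs2.independent (g ` B)"
    using linear_independent_injective_image[OF assms(1) B(2) inj_B] .
  moreover have "g ` X \<subseteq> vs2.span (g ` B)"
    using B(3) linear_span_image[OF assms(1), of B] by blast
  ultimately have "card (g ` B) = vs2.dim (g ` X)"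
    using vs2.basis_card_eq_dim[of "g ` B" "g ` X"] B(1) by blast
  moreover have "card (g ` B) = card B"
    using card_image[OF inj_on_subset[OF inj_B vs1.span_superset]] .
  ultimately show ?thesis
    using B(4) by simp
qed

end

section \<open>Switched linear systems on an abstract vector space\<close>

(* As in reach_rev, the head of a word is the mode applied last. *)
fun reachable :: "('i \<Rightarrow> 'v \<Rightarrow> 'v) \<Rightarrow> ('i \<Rightarrow> 'v::monoid_add set) \<Rightarrow> 'i list \<Rightarrow> 'v set" where
  "reachable f U [] = {0}"
| "reachable f U (i # \<rho>) = {f i x + u |x u. x \<in> reachable f U \<rho> \<and> u \<in> U i}"

fun flow :: "('i \<Rightarrow> 'v \<Rightarrow> 'v) \<Rightarrow> 'i list \<Rightarrow> 'v \<Rightarrow> 'v" where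
  "flow f [] = id"
| "flow f (i # \<rho>) = f i \<circ> flow f \<rho>"

locale switched_system = vector_space scale
  for scale :: "'a::field \<Rightarrow> 'v::ab_group_add \<Rightarrow> 'v" +
  fixes I :: "'i set" and f :: "'i \<Rightarrow> 'v \<Rightarrow> 'v" and U :: "'i \<Rightarrow> 'v set" and V :: "'v set"
  assumes subspace_V: "subspace V"
    and finite_span_V: "\<exists>E. finite E \<and> V \<subseteq> span E"
    and linear_f: "i \<in> I \<Longrightarrow> Vector_Spaces.linear scale scale (f i)"
    and inj_on_f: "i \<in> I \<Longrightarrow> inj_on (f i) V"
    and f_V: "i \<in> I \<Longrightarrow> f i ` V \<subseteq> V"
    and subspace_U: "i \<in> I \<Longrightarrow> subspace (U i)"
    and U_V: "i \<in> I \<Longrightarrow> U i \<subseteq> V"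
begin

sublocale endo: vector_space_pair scale scale ..

lemma dim_mono_V: "X \<subseteq> Y \<Longrightarrow> Y \<subseteq> V \<Longrightarrow> dim X \<le> dim Y"
  using finite_span_V dim_le_dim_if_subset_finite_span by blast

lemma dim_strict_mono_V: "subspace X \<Longrightarrow> X \<subset> Y \<Longrightarrow> Y \<subseteq> V \<Longrightarrow> dim X < dim Y"
  using finite_span_V dim_less_dim_if_psubset_finite_span by blast

lemma subspace_reachable: "\<rho> \<in> lists I \<Longrightarrow> subspace (reachable f U \<rho>)"
proof (induction \<rho>)
  case Nil
  show ?case using subspace_0 by simp
next
  case (Cons i \<rho>)
  then have i: "i \<in> I" and IH: "subspace (reachable f U \<rho>)" by auto
  have "reachable f U (i # \<rho>) = {y + u |y u. y \<in> f i ` reachable f U \<rho> \<and> u \<in> U i}"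
    by auto
  then show ?case
    using subspace_sums[OF endo.linear_subspace_image[OF linear_f[OF i] IH] subspace_U[OF i]]
    by simp
qed

lemma reachable_subset_V: "\<rho> \<in> lists I \<Longrightarrow> reachable f U \<rho> \<subseteq> V"
proof (induction \<rho>)
  case Nil
  show ?case using subspace_0[OF subspace_V] by simp
next
  case (Cons i \<rho>)
  then have i: "i \<in> I" and IH: "reachable f U \<rho> \<subseteq> V" by auto
  show ?case
  proof
    fix z assume "z \<in> reachable f U (i # \<rho>)"
    then obtain x u where "z = f i x + u" "x \<in> reachable f U \<rho>" "u \<in> U i" by auto
    then show "z \<in> V"
      using IH f_V[OF i] U_V[OF i] subspace_add[OF subspace_V] by blast
  qed
qed

lemma linear_flow: "\<rho> \<in> lists I \<Longrightarrow> Vector_Spaces.linear scale scale (flow f \<rho>)"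
proof (induction \<rho>)
  case Nil
  show ?case using linear_id by (simp add: id_def)
next
  case (Cons i \<rho>)
  then have "i \<in> I" "\<rho> \<in> lists I"
    by auto
  then have "Vector_Spaces.linear scale scale (f i \<circ> flow f \<rho>)"
    using Vector_Spaces.linear_compose[OF Cons.IH linear_f] by blast
  then show ?case by (simp only: flow.simps)
qed

lemma flow_image_subset_V: "\<rho> \<in> lists I \<Longrightarrow> flow f \<rho> ` V \<subseteq> V"
  by (induction \<rho>) (use f_V in \<open>auto simp: image_subset_iff\<close>)

lemma inj_on_flow: "\<rho> \<in> lists I \<Longrightarrow> inj_on (flow f \<rho>) V"
proof (induction \<rho>)
  case Nil
  show ?case by simp
next
  case (Cons i \<rho>)
  then have "i \<in> I" "\<rho> \<in> lists I" "inj_on (flow f \<rho>) V"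
    by auto
  then have "inj_on (f i \<circ> flow f \<rho>) V"
    using comp_inj_on inj_on_subset[OF inj_on_f flow_image_subset_V] by blast
  then show ?case by (simp only: flow.simps)
qed

lemma add_flow_mem_reachable_append:
  "\<rho> \<in> lists I \<Longrightarrow> x \<in> reachable f U \<rho> \<Longrightarrow> y \<in> reachable f U \<tau>
    \<Longrightarrow> x + flow f \<rho> y \<in> reachable f U (\<rho> @ \<tau>)"
proof (induction \<rho> arbitrary: x)
  case Nil
  then show ?case by simp
next
  case (Cons i \<rho>)
  then obtain x' u where x: "x = f i x' + u" "x' \<in> reachable f U \<rho>" "u \<in> U i" by auto
  have "x + flow f (i # \<rho>) y = f i (x' + flow f \<rho> y) + u"
    using x(1) endo.linear_add[OF linear_f] Cons.prems(1) by (simp add: algebra_simps)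
  then show ?case
    using Cons x(2,3) by auto
qed

lemma reachable_subset_reachable_append:
  assumes "\<rho> \<in> lists I" "\<tau> \<in> lists I"
  shows "reachable f U \<rho> \<subseteq> reachable f U (\<rho> @ \<tau>)"
proof
  fix x assume "x \<in> reachable f U \<rho>"
  moreover have "0 \<in> reachable f U \<tau>"
    using subspace_0[OF subspace_reachable[OF assms(2)]] .
  ultimately have "x + flow f \<rho> 0 \<in> reachable f U (\<rho> @ \<tau>)"
    using add_flow_mem_reachable_append assms(1) by blast
  moreover have "flow f \<rho> 0 = 0"
    using endo.linear_0[OF linear_flow[OF assms(1)]] .
  ultimately show "x \<in> reachable f U (\<rho> @ \<tau>)"
    by simp
qed

lemma flow_reachable_subset_reachable_append:
  assumes "\<rho> \<in> lists I"
  shows "flow f \<rho> ` reachable f U \<tau> \<subseteq> reachable f U (\<rho> @ \<tau>)"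
proof -
  have "0 \<in> reachable f U \<rho>"
    using subspace_0[OF subspace_reachable[OF assms]] .
  then show ?thesis
    using add_flow_mem_reachable_append[OF assms, of 0] by (auto simp del: reachable.simps)
qed

definition reach_span :: "nat \<Rightarrow> 'v set" where
  "reach_span k = span (\<Union>\<tau>\<in>{\<tau> \<in> lists I. length \<tau> \<le> k}. reachable f U \<tau>)"

lemma reachable_subset_reach_span:
  assumes "\<tau> \<in> lists I" "length \<tau> \<le> k"
  shows "reachable f U \<tau> \<subseteq> reach_span k"
proof -
  have "reachable f U \<tau> \<subseteq> (\<Union>\<sigma>\<in>{\<sigma> \<in> lists I. length \<sigma> \<le> k}. reachable f U \<sigma>)"
    using assms by blast
  then show ?thesis
    unfolding reach_span_def using span_superset by (rule order_trans)
qed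

lemma reach_span_mono: "k \<le> l \<Longrightarrow> reach_span k \<subseteq> reach_span l"
  unfolding reach_span_def by (intro span_mono) auto

lemma reach_span_subset_V: "reach_span k \<subseteq> V"
  unfolding reach_span_def using reachable_subset_V by (intro span_minimal subspace_V) blast

lemma image_reach_span_subset:
  assumes "i \<in> I"
  shows "f i ` reach_span k \<subseteq> reach_span (Suc k)"
proof -
  have "f i x \<in> reach_span (Suc k)" if "\<tau> \<in> lists I" "length \<tau> \<le> k" "x \<in> reachable f U \<tau>" for \<tau> x
  proof -
    have "f i x + 0 \<in> reachable f U (i # \<tau>)"
      using that(3) subspace_0[OF subspace_U[OF assms]] unfolding reachable.simps by blast
    then show ?thesis
      using reachable_subset_reach_span[of "i # \<tau>" "Suc k"] that assms by auto
  qed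
  then have "f i ` (\<Union>\<tau>\<in>{\<tau> \<in> lists I. length \<tau> \<le> k}. reachable f U \<tau>) \<subseteq> reach_span (Suc k)"
    by blast
  then show ?thesis
    unfolding reach_span_def[of k] endo.linear_span_image[OF linear_f[OF assms], symmetric]
    by (intro span_minimal) (auto simp: reach_span_def)
qed

lemma U_subset_reach_span:
  assumes "i \<in> I"
  shows "U i \<subseteq> reach_span (Suc k)"
proof -
  have "U i \<subseteq> reachable f U [i]"
  proof
    fix u assume "u \<in> U i"
    then have "f i 0 + u \<in> reachable f U [i]" by auto
    then show "u \<in> reachable f U [i]"
      using endo.linear_0[OF linear_f[OF assms]] by simp
  qed
  then show ?thesis
    using reachable_subset_reach_span[of "[i]"] assms by auto
qed

lemma reachable_subset_reach_span_if_stable: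
  assumes "reach_span (Suc k) = reach_span k" "\<tau> \<in> lists I"
  shows "reachable f U \<tau> \<subseteq> reach_span k"
  using assms(2)
proof (induction \<tau>)
  case Nil
  show ?case using reachable_subset_reach_span[of "[]"] by simp
next
  case (Cons i \<tau>)
  then have i: "i \<in> I" and IH: "reachable f U \<tau> \<subseteq> reach_span k" by auto
  show ?case
  proof
    fix z assume "z \<in> reachable f U (i # \<tau>)"
    then obtain x u where z: "z = f i x + u" "x \<in> reachable f U \<tau>" "u \<in> U i" by auto
    have "f i x \<in> reach_span (Suc k)"
      using image_reach_span_subset[OF i] IH z(2) by blast
    moreover have "u \<in> reach_span (Suc k)"
      using U_subset_reach_span[OF i] z(3) by blast
    ultimately have "z \<in> reach_span (Suc k)"
      unfolding z(1) reach_span_def by (rule span_add)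
    then show "z \<in> reach_span k"
      using assms(1) by simp
  qed
qed

end

locale controllable_switched_system = switched_system +
  assumes controllable: "V \<subseteq> (\<Union>\<rho>\<in>lists I. reachable f U \<rho>)"
begin

lemma reach_span_eq_V_if_stable:
  assumes "reach_span (Suc k) = reach_span k"
  shows "reach_span k = V"
  using controllable reachable_subset_reach_span_if_stable[OF assms] reach_span_subset_V by blast

lemma le_dim_reach_span: "reach_span k \<noteq> V \<Longrightarrow> k \<le> dim (reach_span k)"
proof (induction k)
  case 0
  then show ?case by simp
next
  case (Suc k)
  have proper: "reach_span k \<noteq> V"
    using Suc.prems reach_span_mono[of k "Suc k"] reach_span_subset_V by auto
  have "reach_span k \<subset> reach_span (Suc k)"
    using Suc.prems reach_span_eq_V_if_stable reach_span_mono[of k "Suc k"] by auto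
  then have "dim (reach_span k) < dim (reach_span (Suc k))"
    using dim_strict_mono_V[OF _ _ reach_span_subset_V] subspace_span
    unfolding reach_span_def by blast
  then show ?case
    using Suc.IH[OF proper] by linarith
qed

lemma exists_extension_enlarging_reachable:
  assumes "\<rho> \<in> lists I" "reachable f U \<rho> \<noteq> V"
  shows "\<exists>\<tau>\<in>lists I. length \<tau> \<le> Suc (dim (reachable f U \<rho>))
           \<and> reachable f U \<rho> \<subset> reachable f U (\<rho> @ \<tau>)"
proof (rule ccontr)
  define R d where "R = reachable f U \<rho>" and "d = dim R"
  have R: "subspace R" "R \<subseteq> V"
    unfolding R_def using subspace_reachable reachable_subset_V assms(1) by auto
  note g = linear_flow[OF assms(1)] inj_on_flow[OF assms(1)]
  assume no_extension: "\<not> ?thesis"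
  have "flow f \<rho> ` reachable f U \<tau> \<subseteq> R" if "\<tau> \<in> lists I" "length \<tau> \<le> Suc d" for \<tau>
  proof -
    have "R = reachable f U (\<rho> @ \<tau>)"
      using no_extension that reachable_subset_reachable_append[OF assms(1) that(1)]
      unfolding R_def d_def by blast
    then show ?thesis
      using flow_reachable_subset_reachable_append[OF assms(1)] by simp
  qed
  then have "flow f \<rho> ` (\<Union>\<tau>\<in>{\<tau> \<in> lists I. length \<tau> \<le> Suc d}. reachable f U \<tau>) \<subseteq> R"
    by blast
  then have "flow f \<rho> ` reach_span (Suc d) \<subseteq> R"
    unfolding reach_span_def endo.linear_span_image[OF g(1), symmetric]
    by (rule span_minimal[OF _ R(1)])
  moreover have "inj_on (flow f \<rho>) (span (reach_span (Suc d)))"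
    using inj_on_subset[OF g(2) reach_span_subset_V] unfolding reach_span_def span_span .
  ultimately have "dim (reach_span (Suc d)) \<le> d"
    using endo.dim_image_eq_if_inj_on_span[OF g(1)] dim_mono_V[OF _ R(2)] unfolding d_def by metis
  moreover have "d < dim V"
    using dim_strict_mono_V[OF R(1) _ order_refl] R(2) assms(2) unfolding R_def d_def by blast
  ultimately show False
    using le_dim_reach_span[of "Suc d"] by force
qed

lemma exists_word_dim_reachable_ge:
  "d \<le> dim V \<Longrightarrow> \<exists>\<rho>\<in>lists I. d \<le> dim (reachable f U \<rho>) \<and> 2 * length \<rho> \<le> d * (d + 1)"
proof (induction d)
  case 0
  show ?case by (intro bexI[of _ "[]"]) auto
next
  case (Suc d)
  then obtain \<rho> where \<rho>: "\<rho> \<in> lists I" "d \<le> dim (reachable f U \<rho>)" "2 * length \<rho> \<le> d * (d + 1)"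
    by auto
  show ?case
  proof (cases "Suc d \<le> dim (reachable f U \<rho>)")
    case True
    then show ?thesis using \<rho> by auto
  next
    case False
    then have dim_\<rho>: "dim (reachable f U \<rho>) = d"
      using \<rho>(2) by simp
    then obtain \<tau> where \<tau>: "\<tau> \<in> lists I" "length \<tau> \<le> Suc d"
      "reachable f U \<rho> \<subset> reachable f U (\<rho> @ \<tau>)"
      using exists_extension_enlarging_reachable[OF \<rho>(1)] Suc.prems by force
    have "d < dim (reachable f U (\<rho> @ \<tau>))"
      using dim_strict_mono_V[OF subspace_reachable[OF \<rho>(1)] \<tau>(3)] reachable_subset_V
        \<rho>(1) \<tau>(1) dim_\<rho>
      by simp
    moreover have "2 * length (\<rho> @ \<tau>) \<le> Suc d * (Suc d + 1)"
      using \<rho>(3) \<tau>(2) by simp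
    ultimately show ?thesis
      using \<rho>(1) \<tau>(1) by (intro bexI[of _ "\<rho> @ \<tau>"]) auto
  qed
qed

theorem exists_controlling_word:
  "\<exists>\<rho>\<in>lists I. reachable f U \<rho> = V \<and> 2 * length \<rho> \<le> dim V * (dim V + 1)"
proof -
  obtain \<rho> where \<rho>: "\<rho> \<in> lists I" "dim V \<le> dim (reachable f U \<rho>)"
    "2 * length \<rho> \<le> dim V * (dim V + 1)"
    using exists_word_dim_reachable_ge[OF order_refl] by blast
  have "reachable f U \<rho> = V"
    using dim_strict_mono_V[OF subspace_reachable[OF \<rho>(1)] _ order_refl]
      reachable_subset_V[OF \<rho>(1)] \<rho>(2)
    by fastforce
  then show ?thesis
    using \<rho> by blast
qed

end

section \<open>Real vectors as sequences\<close>

(* Vectors of different lengths do not form one vector space, so R^n is identified with the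
  sequences that vanish from n on. *)
definition scale_fun :: "'a::field \<Rightarrow> (nat \<Rightarrow> 'a) \<Rightarrow> nat \<Rightarrow> 'a" where
  "scale_fun c g = (\<lambda>i. c * g i)"

interpretation fun_space: vector_space "scale_fun :: 'a::field \<Rightarrow> (nat \<Rightarrow> 'a) \<Rightarrow> nat \<Rightarrow> 'a"
  by unfold_locales (auto simp: scale_fun_def fun_eq_iff algebra_simps)

definition zero_ext :: "'a::zero vec \<Rightarrow> nat \<Rightarrow> 'a" where
  "zero_ext v = (\<lambda>i. if i < dim_vec v then v $ i else 0)"

definition supported_below :: "nat \<Rightarrow> (nat \<Rightarrow> 'a::zero) set" where
  "supported_below n = {g. \<forall>i\<ge>n. g i = 0}"

lemma vec_zero_ext: "v \<in> carrier_vec n \<Longrightarrow> vec n (zero_ext v) = v"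
  unfolding zero_ext_def by auto

lemma zero_ext_vec: "g \<in> supported_below n \<Longrightarrow> zero_ext (vec n g) = g"
  unfolding zero_ext_def supported_below_def by (auto simp: fun_eq_iff)

lemma inj_on_zero_ext: "inj_on zero_ext (carrier_vec n)"
  by (rule inj_on_inverseI[where g = "vec n"]) (rule vec_zero_ext)

lemma zero_ext_carrier_vec: "zero_ext ` carrier_vec n = supported_below n"
proof
  show "zero_ext ` carrier_vec n \<subseteq> supported_below n"
    unfolding zero_ext_def supported_below_def by auto
  show "supported_below n \<subseteq> zero_ext ` carrier_vec n"
    using zero_ext_vec by (metis image_eqI subsetI vec_carrier)
qed

lemma zero_ext_add:
  fixes v w :: "'a::monoid_add vec"
  shows "dim_vec v = dim_vec w \<Longrightarrow> zero_ext (v + w) = zero_ext v + zero_ext w"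
  unfolding zero_ext_def by (auto simp: fun_eq_iff)

lemma zero_ext_smult: "zero_ext (c \<cdot>\<^sub>v v) = scale_fun c (zero_ext v)"
  unfolding zero_ext_def scale_fun_def by (auto simp: fun_eq_iff)

lemma subspace_supported_below:
  "fun_space.subspace (supported_below n :: (nat \<Rightarrow> 'a::field) set)"
  unfolding fun_space.subspace_def supported_below_def scale_fun_def by auto

lemma supported_below_subset_span:
  "supported_below n \<subseteq> fun_space.span ((\<lambda>j i. if i = j then 1 else 0 :: 'a::field) ` {..<n})"
proof
  fix g :: "nat \<Rightarrow> 'a" assume g: "g \<in> supported_below n"
  have "g = (\<Sum>j<n. scale_fun (g j) (\<lambda>i. if i = j then 1 else 0))"
  proof
    fix i
    have "(\<Sum>j<n. scale_fun (g j) (\<lambda>i. if i = j then 1 else 0)) i = (\<Sum>j<n. if i = j then g j else 0)"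
      unfolding scale_fun_def by (induction n) auto
    also have "\<dots> = g i"
      using g unfolding supported_below_def by auto
    finally show "g i = (\<Sum>j<n. scale_fun (g j) (\<lambda>i. if i = j then 1 else 0)) i" ..
  qed
  also have "\<dots> \<in> fun_space.span ((\<lambda>j i. if i = j then 1 else 0) ` {..<n})"
    by (intro fun_space.span_sum fun_space.span_scale fun_space.span_base) auto
  finally show "g \<in> fun_space.span ((\<lambda>j i. if i = j then 1 else 0) ` {..<n})" .
qed

lemma dim_supported_below_le: "fun_space.dim (supported_below n :: (nat \<Rightarrow> 'a::field) set) \<le> n"
proof -
  have "fun_space.dim (supported_below n :: (nat \<Rightarrow> 'a) set)
      \<le> card ((\<lambda>j i. if i = j then 1 else 0 :: 'a) ` {..<n})"
    by (rule fun_space.dim_le_card[OF supported_below_subset_span]) simp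
  also have "\<dots> \<le> n"
    using card_image_le[of "{..<n}"] by simp
  finally show ?thesis .
qed

definition mat_fun :: "'a::field mat \<Rightarrow> (nat \<Rightarrow> 'a) \<Rightarrow> nat \<Rightarrow> 'a" where
  "mat_fun M g = zero_ext (M *\<^sub>v vec (dim_col M) g)"

lemma mat_fun_zero_ext: "v \<in> carrier_vec (dim_col M) \<Longrightarrow> mat_fun M (zero_ext v) = zero_ext (M *\<^sub>v v)"
  unfolding mat_fun_def by (simp add: vec_zero_ext)

lemma range_mat_fun: "range (mat_fun M) = (\<lambda>u. zero_ext (M *\<^sub>v u)) ` carrier_vec (dim_col M)"
proof
  show "range (mat_fun M) \<subseteq> (\<lambda>u. zero_ext (M *\<^sub>v u)) ` carrier_vec (dim_col M)"
    unfolding mat_fun_def by auto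
  show "(\<lambda>u. zero_ext (M *\<^sub>v u)) ` carrier_vec (dim_col M) \<subseteq> range (mat_fun M)"
    using mat_fun_zero_ext by (metis image_subsetI rangeI)
qed

lemma range_mat_fun_subset: "range (mat_fun M) \<subseteq> supported_below (dim_row M)"
  unfolding mat_fun_def zero_ext_def supported_below_def by auto

lemma linear_mat_fun: "Vector_Spaces.linear scale_fun scale_fun (mat_fun M)"
  unfolding Vector_Spaces.linear_iff
proof (intro conjI allI)
  have M: "M \<in> carrier_mat (dim_row M) (dim_col M)" by auto
  show "vector_space scale_fun"
    by (rule fun_space.vector_space_axioms)
  then show "vector_space scale_fun" .
  fix g h :: "nat \<Rightarrow> 'a"
  have "vec (dim_col M) (g + h) = vec (dim_col M) g + vec (dim_col M) h"
    by auto
  then have "M *\<^sub>v vec (dim_col M) (g + h) = M *\<^sub>v vec (dim_col M) g + M *\<^sub>v vec (dim_col M) h"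
    using mult_add_distrib_mat_vec[OF M vec_carrier vec_carrier] by simp
  then show "mat_fun M (g + h) = mat_fun M g + mat_fun M h"
    unfolding mat_fun_def by (simp add: zero_ext_add)
  fix c
  have "vec (dim_col M) (scale_fun c g) = c \<cdot>\<^sub>v vec (dim_col M) g"
    unfolding scale_fun_def by auto
  then show "mat_fun M (scale_fun c g) = scale_fun c (mat_fun M g)"
    unfolding mat_fun_def using zero_ext_smult mult_mat_vec[OF M] by simp
qed

lemma inj_on_mult_mat_vec_invertible:
  assumes "M \<in> carrier_mat n n" "invertible_mat M"
  shows "inj_on ((*\<^sub>v) M) (carrier_vec n)"
proof -
  obtain N where N: "M * N = 1\<^sub>m n" "N * M = 1\<^sub>m (dim_row N)"
    using assms unfolding invertible_mat_def inverts_mat_def by auto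
  then have "N \<in> carrier_mat n n"
    using assms(1) by (metis carrier_matD index_mult_mat(2,3) index_one_mat(2,3) carrier_matI)
  then have "N *\<^sub>v (M *\<^sub>v v) = v" if "v \<in> carrier_vec n" for v
    using N that assms(1) by (simp add: assoc_mult_mat_vec[symmetric])
  then show ?thesis
    by (rule inj_on_inverseI)
qed

lemma inj_on_mat_fun:
  assumes "M \<in> carrier_mat n n" "invertible_mat M"
  shows "inj_on (mat_fun M) (supported_below n)"
proof
  fix g h assume "g \<in> supported_below n" "h \<in> supported_below n" "mat_fun M g = mat_fun M h"
  then have "M *\<^sub>v vec n g = M *\<^sub>v vec n h"
    using assms(1) inj_on_zero_ext[of n] unfolding mat_fun_def by (auto dest: inj_onD)
  then have "vec n g = vec n h"
    using inj_on_mult_mat_vec_invertible[OF assms] by (auto dest: inj_onD)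
  then show "g = h"
    using zero_ext_vec \<open>g \<in> supported_below n\<close> \<open>h \<in> supported_below n\<close> by metis
qed

lemma word_iff_lists: "word m \<pi> \<longleftrightarrow> \<pi> \<in> lists {..<m}"
  unfolding word_def by auto

lemma reach_rev_subset_carrier:
  assumes "\<forall>i\<in>set \<rho>. A i \<in> carrier_mat n n \<and> dim_row (B i) = n"
  shows "reach_rev A B n \<rho> \<subseteq> carrier_vec n"
  using assms by (induction \<rho>) (auto intro!: add_carrier_vec mult_mat_vec_carrier)

lemma zero_ext_image_step:
  assumes "M \<in> carrier_mat n n" "dim_row N = n" "S \<subseteq> carrier_vec n"
  shows "zero_ext ` {M *\<^sub>v x + N *\<^sub>v u |x u. x \<in> S \<and> u \<in> carrier_vec (dim_col N)}
    = {mat_fun M y + w |y w. y \<in> zero_ext ` S \<and> w \<in> range (mat_fun N)}"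
proof -
  have split: "zero_ext (M *\<^sub>v x + N *\<^sub>v u) = mat_fun M (zero_ext x) + zero_ext (N *\<^sub>v u)"
    if "x \<in> S" for x u
    using that assms by (auto simp: zero_ext_add mat_fun_zero_ext)
  show ?thesis
  proof (intro Set.set_eqI iffI)
    fix z assume "z \<in> zero_ext ` {M *\<^sub>v x + N *\<^sub>v u |x u. x \<in> S \<and> u \<in> carrier_vec (dim_col N)}"
    then obtain x u where "z = zero_ext (M *\<^sub>v x + N *\<^sub>v u)" "x \<in> S" "u \<in> carrier_vec (dim_col N)"
      by auto
    then show "z \<in> {mat_fun M y + w |y w. y \<in> zero_ext ` S \<and> w \<in> range (mat_fun N)}"
      using split range_mat_fun by blast
  next
    fix z assume "z \<in> {mat_fun M y + w |y w. y \<in> zero_ext ` S \<and> w \<in> range (mat_fun N)}"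
    then obtain x u where z: "z = mat_fun M (zero_ext x) + zero_ext (N *\<^sub>v u)"
      and x: "x \<in> S" and u: "u \<in> carrier_vec (dim_col N)"
      unfolding range_mat_fun by blast
    then have "z = zero_ext (M *\<^sub>v x + N *\<^sub>v u)"
      using split by simp
    then show "z \<in> zero_ext ` {M *\<^sub>v x + N *\<^sub>v u |x u. x \<in> S \<and> u \<in> carrier_vec (dim_col N)}"
      using x u by blast
  qed
qed

lemma zero_ext_reach_rev:
  assumes "\<forall>i\<in>set \<rho>. A i \<in> carrier_mat n n \<and> dim_row (B i) = n"
  shows "zero_ext ` reach_rev A B n \<rho>
    = reachable (\<lambda>i. mat_fun (A i)) (\<lambda>i. range (mat_fun (B i))) \<rho>"
  using assms
proof (induction \<rho>)
  case Nil
  show ?case by (simp add: zero_ext_def fun_eq_iff)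
next
  case (Cons i \<rho>)
  then show ?case
    using zero_ext_image_step[of "A i" n "B i"] reach_rev_subset_carrier[of \<rho> A n B] by simp
qed

lemma switched_system_of_sys_ok:
  assumes "sys_ok n m A B"
  shows "switched_system scale_fun {..<m} (\<lambda>i. mat_fun (A i)) (\<lambda>i. range (mat_fun (B i)))
    (supported_below n)"
proof (intro switched_system.intro fun_space.vector_space_axioms switched_system_axioms.intro)
  have A: "A i \<in> carrier_mat n n" "invertible_mat (A i)" and B: "dim_row (B i) = n"
    if "i \<in> {..<m}" for i
    using assms that unfolding sys_ok_def by auto
  show "fun_space.subspace (supported_below n)"
    by (rule subspace_supported_below)
  show "\<exists>E. finite E \<and> supported_below n \<subseteq> fun_space.span E"
    using supported_below_subset_span by blast
  show "Vector_Spaces.linear scale_fun scale_fun (mat_fun (A i))" for i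
    by (rule linear_mat_fun)
  show "inj_on (mat_fun (A i)) (supported_below n)" if "i \<in> {..<m}" for i
    using inj_on_mat_fun A that by blast
  show "mat_fun (A i) ` supported_below n \<subseteq> supported_below n" if "i \<in> {..<m}" for i
    using range_mat_fun_subset[of "A i"] A that by fastforce
  interpret vector_space_pair scale_fun scale_fun ..
  show "fun_space.subspace (range (mat_fun (B i)))" for i
    using linear_subspace_image[OF linear_mat_fun fun_space.subspace_UNIV] .
  show "range (mat_fun (B i)) \<subseteq> supported_below n" if "i \<in> {..<m}" for i
    using range_mat_fun_subset[of "B i"] B that by simp
qed

lemma sys_ok_dims:
  "sys_ok n m A B \<Longrightarrow> \<rho> \<in> lists {..<m} \<Longrightarrow> \<forall>i\<in>set \<rho>. A i \<in> carrier_mat n n \<and> dim_row (B i) = n"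
  unfolding sys_ok_def by auto

lemma controllable_seq_rev_iff:
  assumes "sys_ok n m A B" "\<rho> \<in> lists {..<m}"
  shows "controllable_seq A B n (rev \<rho>)
    \<longleftrightarrow> reachable (\<lambda>i. mat_fun (A i)) (\<lambda>i. range (mat_fun (B i))) \<rho> = supported_below n"
proof -
  have "reach_rev A B n \<rho> = carrier_vec n \<longleftrightarrow> zero_ext ` reach_rev A B n \<rho> = zero_ext ` carrier_vec n"
    using inj_on_image_eq_iff[OF inj_on_zero_ext reach_rev_subset_carrier[OF sys_ok_dims[OF assms]]]
    by blast
  then show ?thesis
    unfolding controllable_seq_def reach_def rev_rev_ident zero_ext_carrier_vec
      zero_ext_reach_rev[OF sys_ok_dims[OF assms]] .
qed

lemma controllable_switched_system_of_controllable_sys: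
  assumes "sys_ok n m A B" "controllable_sys A B n m"
  shows "controllable_switched_system scale_fun {..<m}
    (\<lambda>i. mat_fun (A i)) (\<lambda>i. range (mat_fun (B i))) (supported_below n)"
proof (intro controllable_switched_system.intro switched_system_of_sys_ok[OF assms(1)]
    controllable_switched_system_axioms.intro subsetI)
  fix g :: "nat \<Rightarrow> real" assume "g \<in> supported_below n"
  then obtain v where v: "v \<in> carrier_vec n" "g = zero_ext v"
    using zero_ext_carrier_vec by blast
  then obtain \<pi> where "\<pi> \<in> lists {..<m}" "v \<in> reach_rev A B n (rev \<pi>)"
    using assms(2) unfolding controllable_sys_def reach_def word_iff_lists by blast
  then have \<pi>: "rev \<pi> \<in> lists {..<m}" "v \<in> reach_rev A B n (rev \<pi>)"
    by auto
  then have "g \<in> reachable (\<lambda>i. mat_fun (A i)) (\<lambda>i. range (mat_fun (B i))) (rev \<pi>)"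
    using zero_ext_reach_rev[OF sys_ok_dims[OF assms(1) \<pi>(1)], symmetric] v(2) by blast
  with \<pi>(1) show
    "g \<in> (\<Union>\<rho>\<in>lists {..<m}. reachable (\<lambda>i. mat_fun (A i)) (\<lambda>i. range (mat_fun (B i))) \<rho>)"
    by blast
qed

theorem exists_short_controllable_seq:
  assumes "sys_ok n m A B" "controllable_sys A B n m"
  shows "\<exists>\<pi>. word m \<pi> \<and> controllable_seq A B n \<pi> \<and> 2 * length \<pi> \<le> n * (n + 1)"
proof -
  interpret controllable_switched_system scale_fun "{..<m}" "\<lambda>i. mat_fun (A i)"
    "\<lambda>i. range (mat_fun (B i))" "supported_below n"
    using controllable_switched_system_of_controllable_sys[OF assms] .
  let ?d = "fun_space.dim (supported_below n :: (nat \<Rightarrow> real) set)"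
  obtain \<rho> where \<rho>: "\<rho> \<in> lists {..<m}"
    "reachable (\<lambda>i. mat_fun (A i)) (\<lambda>i. range (mat_fun (B i))) \<rho> = supported_below n"
    "2 * length \<rho> \<le> ?d * (?d + 1)"
    using exists_controlling_word by blast
  have "?d * (?d + 1) \<le> n * (n + 1)"
    using dim_supported_below_le by (intro mult_le_mono) auto
  then have "2 * length (rev \<rho>) \<le> n * (n + 1)"
    using \<rho>(3) by simp
  moreover have "word m (rev \<rho>)"
    using \<rho>(1) by (auto simp: word_def)
  ultimately show ?thesis
    using controllable_seq_rev_iff[OF assms(1) \<rho>(1)] \<rho>(2) by blast
qed

section \<open>A system with long shortest controllable sequences\<close>

definition perm_mat :: "nat \<Rightarrow> (nat \<Rightarrow> nat) \<Rightarrow> 'a::semiring_1 mat" where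
  "perm_mat n g = mat n n (\<lambda>(i, j). if j = g i then 1 else 0)"

lemma perm_mat_carrier: "perm_mat n g \<in> carrier_mat n n"
  unfolding perm_mat_def by simp

lemma perm_mat_mult_vec:
  assumes "x \<in> carrier_vec n" "i < n" "g i < n"
  shows "(perm_mat n g *\<^sub>v x) $ i = x $ g i"
proof -
  have "(perm_mat n g *\<^sub>v x) $ i = (\<Sum>j<n. (if j = g i then 1 else 0) * x $ j)"
    using assms unfolding perm_mat_def by (simp add: scalar_prod_def lessThan_atLeast0)
  also have "\<dots> = x $ g i"
    using assms(3) by (simp add: if_distrib[of "\<lambda>c. c * _"] cong: if_cong)
  finally show ?thesis .
qed

lemma perm_mat_mult_perm_mat:
  assumes "\<forall>i<n. g i < n \<and> h (g i) = i"
  shows "perm_mat n g * perm_mat n h = (1\<^sub>m n :: 'a::semiring_1 mat)"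
proof (rule eq_matI)
  fix i k assume "i < dim_row (1\<^sub>m n :: 'a mat)" "k < dim_col (1\<^sub>m n :: 'a mat)"
  then have i: "i < n" and k: "k < n" by auto
  have "(perm_mat n g * perm_mat n h :: 'a mat) $$ (i, k)
      = (\<Sum>j<n. (if j = g i then 1 else 0) * (if k = h j then 1 else 0))"
    using i k unfolding perm_mat_def by (simp add: scalar_prod_def lessThan_atLeast0)
  also have "\<dots> = (if k = h (g i) then 1 else 0)"
    using assms i by (simp add: if_distrib[of "\<lambda>c. c * _"] cong: if_cong)
  also have "\<dots> = 1\<^sub>m n $$ (i, k)"
    using assms i k by auto
  finally show "(perm_mat n g * perm_mat n h :: 'a mat) $$ (i, k) = 1\<^sub>m n $$ (i, k)" .
qed (auto simp: perm_mat_def)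

lemma invertible_perm_mat:
  assumes "\<forall>i<n. g i < n \<and> h i < n \<and> h (g i) = i \<and> g (h i) = i"
  shows "invertible_mat (perm_mat n g :: 'a::semiring_1 mat)"
  unfolding invertible_mat_def inverts_mat_def
proof (intro conjI exI)
  show "square_mat (perm_mat n g :: 'a mat)"
    by (simp add: perm_mat_def)
  show "perm_mat n g * perm_mat n h = (1\<^sub>m (dim_row (perm_mat n g)) :: 'a mat)"
    using perm_mat_mult_perm_mat[of n g h] assms by (simp add: perm_mat_def)
  show "perm_mat n h * perm_mat n g = (1\<^sub>m (dim_row (perm_mat n h)) :: 'a mat)"
    using perm_mat_mult_perm_mat[of n h g] assms by (simp add: perm_mat_def)
qed

definition block_rot :: "nat \<Rightarrow> nat \<Rightarrow> nat" where
  "block_rot r j = (if j = 0 then r - 1 else if j < r then j - 1 else j)"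

definition block_rot_inv :: "nat \<Rightarrow> nat \<Rightarrow> nat" where
  "block_rot_inv r j = (if j + 1 = r then 0 else if j < r then j + 1 else j)"

definition mode_perm :: "nat \<Rightarrow> nat \<Rightarrow> nat \<Rightarrow> nat" where
  "mode_perm r k =
     (if k = 0 then block_rot r else Transposition.transpose (r + k - 2) (r + k - 1))"

definition mode_perm_inv :: "nat \<Rightarrow> nat \<Rightarrow> nat \<Rightarrow> nat" where
  "mode_perm_inv r k =
     (if k = 0 then block_rot_inv r else Transposition.transpose (r + k - 2) (r + k - 1))"

lemma mode_perm_inverse:
  assumes "1 \<le> r" "k \<le> p" "j < r + p"
  shows "mode_perm r k j < r + p \<and> mode_perm_inv r k j < r + p
    \<and> mode_perm_inv r k (mode_perm r k j) = j \<and> mode_perm r k (mode_perm_inv r k j) = j"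
proof (cases "k = 0")
  case True
  then show ?thesis
    using assms unfolding mode_perm_def mode_perm_inv_def block_rot_def block_rot_inv_def by auto
next
  case False
  then have "r + k - 1 < r + p" "r + k - 1 = Suc (r + k - 2)"
    using assms by auto
  then show ?thesis
    using False assms(3) unfolding mode_perm_def mode_perm_inv_def Transposition.transpose_def
    by auto
qed

definition extremal_A :: "nat \<Rightarrow> nat \<Rightarrow> nat \<Rightarrow> real mat" where
  "extremal_A r p i = perm_mat (r + p) (mode_perm r (min i p))"

definition extremal_B :: "nat \<Rightarrow> nat \<Rightarrow> nat \<Rightarrow> real mat" where
  "extremal_B r p i = (if min i p = 0 then mat (r + p) 1 (\<lambda>(j, _). if j = 0 then 1 else 0)
     else mat (r + p) 0 (\<lambda>_. 0))"

definition active_step :: "nat \<Rightarrow> nat \<Rightarrow> nat \<Rightarrow> nat set \<Rightarrow> nat set" where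
  "active_step r p i T =
     {j. j < r + p \<and> mode_perm r (min i p) j \<in> T} \<union> (if min i p = 0 then {0} else {})"

fun active :: "nat \<Rightarrow> nat \<Rightarrow> nat list \<Rightarrow> nat set" where
  "active r p [] = {}"
| "active r p (i # \<rho>) = active_step r p i (active r p \<rho>)"

definition coord_space :: "nat \<Rightarrow> nat set \<Rightarrow> real vec set" where
  "coord_space n T = {x \<in> carrier_vec n. \<forall>j<n. j \<notin> T \<longrightarrow> x $ j = 0}"

lemma extremal_A_mult_vec:
  assumes "1 \<le> r" "x \<in> carrier_vec (r + p)" "j < r + p"
  shows "(extremal_A r p i *\<^sub>v x) $ j = x $ mode_perm r (min i p) j"
  unfolding extremal_A_def
  using perm_mat_mult_vec assms mode_perm_inverse[OF assms(1) min.cobounded2] by blast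

lemma extremal_A_carrier: "extremal_A r p i \<in> carrier_mat (r + p) (r + p)"
  unfolding extremal_A_def by (rule perm_mat_carrier)

lemma extremal_B_dims:
  "dim_row (extremal_B r p i) = r + p" "dim_col (extremal_B r p i) = (if min i p = 0 then 1 else 0)"
  unfolding extremal_B_def by auto

lemma extremal_B_mult_vec:
  assumes "j < r + p" "u \<in> carrier_vec (dim_col (extremal_B r p i))"
  shows "(extremal_B r p i *\<^sub>v u) $ j = (if min i p = 0 \<and> j = 0 then u $ 0 else 0)"
  using assms unfolding extremal_B_def by (auto simp: scalar_prod_def)

lemma extremal_step_mem_coord_space:
  assumes "1 \<le> r" "x \<in> coord_space (r + p) T" "u \<in> carrier_vec (dim_col (extremal_B r p i))"
  shows "extremal_A r p i *\<^sub>v x + extremal_B r p i *\<^sub>v u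
    \<in> coord_space (r + p) (active_step r p i T)"
proof -
  let ?z = "extremal_A r p i *\<^sub>v x + extremal_B r p i *\<^sub>v u"
  have x: "x \<in> carrier_vec (r + p)"
    using assms(2) unfolding coord_space_def by simp
  have B_u: "extremal_B r p i *\<^sub>v u \<in> carrier_vec (r + p)"
    by (rule carrier_vecI) (simp add: extremal_B_dims(1))
  have "?z $ j = 0" if j: "j < r + p" "j \<notin> active_step r p i T" for j
  proof -
    have "mode_perm r (min i p) j \<notin> T" "\<not> (min i p = 0 \<and> j = 0)"
      using j unfolding active_step_def by (auto split: if_split_asm)
    moreover have "mode_perm r (min i p) j < r + p"
      using mode_perm_inverse[OF assms(1) min.cobounded2 j(1)] by blast
    ultimately have "x $ mode_perm r (min i p) j = 0" "(extremal_B r p i *\<^sub>v u) $ j = 0"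
      using assms(2) extremal_B_mult_vec[OF j(1) assms(3)] unfolding coord_space_def by auto
    moreover have "?z $ j = (extremal_A r p i *\<^sub>v x) $ j + (extremal_B r p i *\<^sub>v u) $ j"
      by (rule index_add_vec(1)) (simp add: extremal_B_dims(1) j(1))
    ultimately show ?thesis
      using extremal_A_mult_vec[OF assms(1) x j(1)] by simp
  qed
  moreover have "?z \<in> carrier_vec (r + p)"
    using mult_mat_vec_carrier[OF extremal_A_carrier x] B_u by (rule add_carrier_vec)
  ultimately show ?thesis
    unfolding coord_space_def by blast
qed

lemma coord_space_active_step_decomp:
  assumes "1 \<le> r" "y \<in> coord_space (r + p) (active_step r p i T)"
  shows "\<exists>x u. y = extremal_A r p i *\<^sub>v x + extremal_B r p i *\<^sub>v u
    \<and> x \<in> coord_space (r + p) T \<and> u \<in> carrier_vec (dim_col (extremal_B r p i))"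
proof (intro exI conjI)
  let ?g = "mode_perm r (min i p)" and ?h = "mode_perm_inv r (min i p)"
  have g: "?g j < r + p" "?h j < r + p" "?h (?g j) = j" "?g (?h j) = j" if "j < r + p" for j
    using mode_perm_inverse[OF assms(1) min.cobounded2 that] by auto
  define x where "x = vec (r + p) (\<lambda>k. if k \<in> T then y $ ?h k else 0)"
  define u where "u = vec (dim_col (extremal_B r p i)) (\<lambda>_. y $ 0 - (extremal_A r p i *\<^sub>v x) $ 0)"
  show x: "x \<in> coord_space (r + p) T" and u: "u \<in> carrier_vec (dim_col (extremal_B r p i))"
    unfolding x_def u_def coord_space_def by auto
  show "y = extremal_A r p i *\<^sub>v x + extremal_B r p i *\<^sub>v u"
  proof (rule eq_vecI)
    show "dim_vec y = dim_vec (extremal_A r p i *\<^sub>v x + extremal_B r p i *\<^sub>v u)"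
      using assms(2) unfolding coord_space_def by (simp add: extremal_B_dims(1))
    fix j assume "j < dim_vec (extremal_A r p i *\<^sub>v x + extremal_B r p i *\<^sub>v u)"
    then have j: "j < r + p"
      by (simp add: extremal_B_dims(1))
    have A_x: "(extremal_A r p i *\<^sub>v x) $ j = (if ?g j \<in> T then y $ j else 0)"
      using extremal_A_mult_vec[OF assms(1) _ j] g[OF j] unfolding x_def by simp
    have B_u: "(extremal_B r p i *\<^sub>v u) $ j
        = (if min i p = 0 \<and> j = 0 then y $ 0 - (extremal_A r p i *\<^sub>v x) $ 0 else 0)"
      using extremal_B_mult_vec[OF j u] unfolding u_def by (auto simp: extremal_B_dims(2))
    have "y $ j = (extremal_A r p i *\<^sub>v x) $ j + (extremal_B r p i *\<^sub>v u) $ j"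
    proof (cases "min i p = 0 \<and> j = 0")
      case True
      then show ?thesis
        using B_u by simp
    next
      case False
      have "j \<notin> active_step r p i T \<Longrightarrow> y $ j = 0"
        using assms(2) j unfolding coord_space_def by blast
      then show ?thesis
        using False j unfolding A_x B_u by (auto simp: active_step_def)
    qed
    also have "\<dots> = (extremal_A r p i *\<^sub>v x + extremal_B r p i *\<^sub>v u) $ j"
      by (rule index_add_vec(1)[symmetric]) (simp add: extremal_B_dims(1) j)
    finally show "y $ j = (extremal_A r p i *\<^sub>v x + extremal_B r p i *\<^sub>v u) $ j" .
  qed
qed

lemma reach_rev_extremal:
  assumes "1 \<le> r"
  shows "reach_rev (extremal_A r p) (extremal_B r p) (r + p) \<rho> = coord_space (r + p) (active r p \<rho>)"
proof (induction \<rho>)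
  case Nil
  show ?case
    unfolding coord_space_def by (auto intro: eq_vecI)
next
  case (Cons i \<rho>)
  show ?case
    unfolding reach_rev.simps active.simps Cons.IH
    using extremal_step_mem_coord_space[OF assms] coord_space_active_step_decomp[OF assms]
    by blast
qed

lemma controllable_seq_extremal_iff:
  assumes "1 \<le> r"
  shows "controllable_seq (extremal_A r p) (extremal_B r p) (r + p) \<pi>
    \<longleftrightarrow> {..<r + p} \<subseteq> active r p (rev \<pi>)"
proof
  assume "controllable_seq (extremal_A r p) (extremal_B r p) (r + p) \<pi>"
  then have "coord_space (r + p) (active r p (rev \<pi>)) = carrier_vec (r + p)"
    unfolding controllable_seq_def reach_def reach_rev_extremal[OF assms] .
  then have "unit_vec (r + p) j \<in> coord_space (r + p) (active r p (rev \<pi>))" if "j < r + p" for j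
    by simp
  then show "{..<r + p} \<subseteq> active r p (rev \<pi>)"
    unfolding coord_space_def by fastforce
next
  assume "{..<r + p} \<subseteq> active r p (rev \<pi>)"
  then show "controllable_seq (extremal_A r p) (extremal_B r p) (r + p) \<pi>"
    unfolding controllable_seq_def reach_def reach_rev_extremal[OF assms] coord_space_def by auto
qed

lemma sys_ok_extremal:
  assumes "1 \<le> r" "p < m"
  shows "sys_ok (r + p) m (extremal_A r p) (extremal_B r p)"
  unfolding sys_ok_def
proof (intro conjI allI impI)
  fix i
  show "extremal_A r p i \<in> carrier_mat (r + p) (r + p)"
    by (rule extremal_A_carrier)
  show "invertible_mat (extremal_A r p i)"
    unfolding extremal_A_def using mode_perm_inverse[OF assms(1) min.cobounded2]
    by (intro invertible_perm_mat[where h = "mode_perm_inv r (min i p)"]) blast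
  show "dim_row (extremal_B r p i) = r + p"
    by (rule extremal_B_dims(1))
qed (use assms in auto)

(* A coordinate j >= r becomes reachable only after an input has been carried from
  coordinate r - 1 through j - r + 1 swaps. *)
definition weight :: "nat \<Rightarrow> nat \<Rightarrow> nat" where
  "weight r j = (if j < r then 1 else j + 2 - r)"

definition potential :: "nat \<Rightarrow> nat \<Rightarrow> nat set \<Rightarrow> nat" where
  "potential r p T = (\<Sum>j<r + p. if j \<in> T then weight r j else 0)"

lemma weight_mode_perm_inv_le:
  assumes "1 \<le> r" "k \<le> p" "j < r + p"
  shows "weight r (mode_perm_inv r k j) \<le> weight r j + (if k \<noteq> 0 \<and> j = r + k - 2 then 1 else 0)"
proof (cases "k = 0")
  case True
  then show ?thesis
    using assms unfolding mode_perm_inv_def block_rot_inv_def weight_def by auto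
next
  case False
  then have "r + k - 1 = Suc (r + k - 2)" "r \<le> Suc (r + k - 2)"
    using assms(1) by auto
  then show ?thesis
    using False unfolding mode_perm_inv_def Transposition.transpose_def weight_def by auto
qed

lemma potential_preimage_le:
  assumes "1 \<le> r" "k \<le> p"
  shows "(\<Sum>j<r + p. if mode_perm r k j \<in> T then weight r j else 0)
    \<le> potential r p T + (if k \<noteq> 0 then 1 else 0)"
proof -
  let ?g = "mode_perm r k" and ?h = "mode_perm_inv r k" and ?a = "r + k - 2"
  have g: "?g j < r + p" "?h j < r + p" "?h (?g j) = j" "?g (?h j) = j" if "j < r + p" for j
    using mode_perm_inverse[OF assms that] by auto
  have "bij_betw ?h {..<r + p} {..<r + p}"
    by (rule bij_betw_byWitness[where f' = ?g]) (use g in auto)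
  then have "(\<Sum>j<r + p. if ?g j \<in> T then weight r j else 0)
      = (\<Sum>j<r + p. if ?g (?h j) \<in> T then weight r (?h j) else 0)"
    by (rule sum.reindex_bij_betw[symmetric])
  also have "\<dots> = (\<Sum>j<r + p. if j \<in> T then weight r (?h j) else 0)"
    using g by (intro sum.cong) auto
  also have "\<dots> \<le> (\<Sum>j<r + p. (if j \<in> T then weight r j else 0) + (if k \<noteq> 0 \<and> j = ?a then 1 else 0))"
    using weight_mode_perm_inv_le[OF assms] by (intro sum_mono) auto
  also have "\<dots> = potential r p T + (\<Sum>j<r + p. if k \<noteq> 0 \<and> j = ?a then 1 else 0)"
    unfolding potential_def by (rule sum.distrib)
  also have "(\<Sum>j<r + p. if k \<noteq> 0 \<and> j = ?a then 1 else 0) \<le> (if k \<noteq> 0 then 1 else (0::nat))"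
    by (simp add: sum.delta)
  finally show ?thesis
    by simp
qed

lemma potential_active_step_le:
  assumes "1 \<le> r"
  shows "potential r p (active_step r p i T) \<le> potential r p T + 1"
proof -
  define k where "k = min i p"
  have "potential r p (active_step r p i T)
      \<le> (\<Sum>j<r + p. (if mode_perm r k j \<in> T then weight r j else 0)
          + (if k = 0 \<and> j = 0 then weight r j else 0))"
    unfolding potential_def active_step_def k_def by (intro sum_mono) auto
  also have "\<dots> = (\<Sum>j<r + p. if mode_perm r k j \<in> T then weight r j else 0)
      + (if k = 0 then 1 else 0)"
    using assms by (simp add: sum.distrib sum.delta weight_def)
  also have "\<dots> \<le> potential r p T + 1"
  proof -
    have "(\<Sum>j<r + p. if mode_perm r k j \<in> T then weight r j else 0)
        \<le> potential r p T + (if k \<noteq> 0 then 1 else 0)"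
      unfolding k_def by (rule potential_preimage_le[OF assms min.cobounded2])
    then show ?thesis
      by (cases "k = 0") simp_all
  qed
  finally show ?thesis .
qed

lemma potential_active_le_length: "1 \<le> r \<Longrightarrow> potential r p (active r p \<rho>) \<le> length \<rho>"
proof (induction \<rho>)
  case Nil
  then show ?case unfolding potential_def by simp
next
  case (Cons i \<rho>)
  then show ?case
    using potential_active_step_le[OF Cons.prems, of p i "active r p \<rho>"] by simp
qed

lemma sum_weight: "2 * (\<Sum>j<r + t. weight r j) = 2 * r + t * (t + 3)"
proof (induction t)
  case 0
  have "(\<Sum>j<r. weight r j) = r"
    by (simp add: weight_def)
  then show ?case by simp
next
  case (Suc t)
  have "weight r (r + t) = t + 2"
    unfolding weight_def by simp
  then show ?case
    using Suc by (simp add: algebra_simps)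
qed

lemma potential_eq_if_full:
  "{..<r + p} \<subseteq> T \<Longrightarrow> 2 * potential r p T = 2 * r + p * (p + 3)"
  unfolding potential_def using sum_weight[of r p] by (simp add: subset_iff)

(* Once the block {..<r} is filled, sweep c moves coordinate r - 1 to r + c by the swap
  modes 1, ..., c + 1 and refills the block with mode 0. *)
fun sweeps :: "nat \<Rightarrow> nat list" where
  "sweeps 0 = []"
| "sweeps (Suc c) = ([1..<c + 2] @ [0]) @ sweeps c"

definition witness :: "nat \<Rightarrow> nat \<Rightarrow> nat list" where
  "witness r p = replicate r 0 @ sweeps p"

lemma active_rev: "active r p (rev \<pi>) = fold (active_step r p) \<pi> {}"
  by (induction \<pi> rule: rev_induct) auto

lemma fold_fill_block: "k \<le> r \<Longrightarrow> fold (active_step r p) (replicate k 0) {} = {..<k}"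
proof (induction k)
  case 0
  show ?case by simp
next
  case (Suc k)
  have "fold (active_step r p) (replicate (Suc k) 0) {} = active_step r p 0 {..<k}"
    using Suc by (simp add: replicate_append_same[symmetric])
  also have "\<dots> = {..<Suc k}"
    using Suc.prems unfolding active_step_def mode_perm_def block_rot_def by auto
  finally show ?case .
qed

lemma transpose_preimage_insert:
  "a \<notin> X \<Longrightarrow> b \<notin> X \<Longrightarrow> {j. Transposition.transpose a b j \<in> insert a X} = insert b X"
  unfolding Transposition.transpose_def by auto

lemma fold_carry:
  assumes "1 \<le> r" "c < p"
  shows "s \<le> Suc c \<Longrightarrow> fold (active_step r p) [1..<Suc s] ({..<r} \<union> {r + c + 1..<r + p})
    = insert (r + s - 1) ({..<r - 1} \<union> {r + c + 1..<r + p})"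
proof (induction s)
  case 0
  show ?case using assms(1) by auto
next
  case (Suc s)
  let ?X = "{..<r - 1} \<union> {r + c + 1..<r + p}"
  have "fold (active_step r p) [1..<Suc (Suc s)] ({..<r} \<union> {r + c + 1..<r + p})
      = active_step r p (Suc s) (insert (r + s - 1) ?X)"
    using Suc by simp
  also have "\<dots> = {..<r + p}
      \<inter> {j. Transposition.transpose (r + s - 1) (r + s) j \<in> insert (r + s - 1) ?X}"
    using Suc.prems assms unfolding active_step_def mode_perm_def by auto
  also have "\<dots> = insert (r + Suc s - 1) ?X"
    using Suc.prems assms by (subst transpose_preimage_insert) auto
  finally show ?case .
qed

lemma fold_sweep:
  assumes "1 \<le> r" "c < p"
  shows "fold (active_step r p) ([1..<c + 2] @ [0]) ({..<r} \<union> {r + c + 1..<r + p})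
    = {..<r} \<union> {r + c..<r + p}"
proof -
  have "fold (active_step r p) ([1..<c + 2] @ [0]) ({..<r} \<union> {r + c + 1..<r + p})
      = active_step r p 0 (insert (r + c) ({..<r - 1} \<union> {r + c + 1..<r + p}))"
    using fold_carry[OF assms, of "Suc c"] by simp
  also have "\<dots> = {..<r} \<union> {r + c..<r + p}"
    using assms unfolding active_step_def mode_perm_def block_rot_def by auto
  finally show ?thesis .
qed

lemma fold_sweeps:
  assumes "1 \<le> r"
  shows "c \<le> p \<Longrightarrow> fold (active_step r p) (sweeps c) ({..<r} \<union> {r + c..<r + p}) = {..<r + p}"
proof (induction c)
  case 0
  show ?case by auto
next
  case (Suc c)
  then show ?case
    using fold_sweep[OF assms, of c] by simp
qed

lemma active_witness: "1 \<le> r \<Longrightarrow> active r p (rev (witness r p)) = {..<r + p}"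
  unfolding active_rev witness_def using fold_fill_block[of r r p] fold_sweeps[of r p p] by simp

lemma length_sweeps: "2 * length (sweeps c) = c * (c + 3)"
  by (induction c) (auto simp: algebra_simps)

lemma set_sweeps: "set (sweeps c) \<subseteq> {..c}"
  by (induction c) auto

theorem shortest_ctrl_len_extremal:
  assumes "1 \<le> r" "p < m"
  shows "controllable_sys (extremal_A r p) (extremal_B r p) (r + p) m
    \<and> shortest_ctrl_len (extremal_A r p) (extremal_B r p) (r + p) m (r + p + p * (p + 1) div 2)"
proof -
  let ?L = "r + p + p * (p + 1) div 2"
  have two_L: "2 * ?L = 2 * r + p * (p + 3)"
    by (induction p) (auto simp: algebra_simps)
  have "word m (witness r p)"
    using set_sweeps[of p] assms(2) unfolding word_def witness_def by auto
  moreover have "controllable_seq (extremal_A r p) (extremal_B r p) (r + p) (witness r p)"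
    using active_witness[OF assms(1)] controllable_seq_extremal_iff[OF assms(1)] by simp
  moreover have "length (witness r p) = ?L"
    using two_L length_sweeps[of p] unfolding witness_def by simp
  ultimately have witness: "word m (witness r p)"
    "controllable_seq (extremal_A r p) (extremal_B r p) (r + p) (witness r p)"
    "length (witness r p) = ?L"
    by blast+
  have "reach (extremal_A r p) (extremal_B r p) (r + p) \<pi> \<subseteq> carrier_vec (r + p)" for \<pi>
    unfolding reach_def reach_rev_extremal[OF assms(1)] coord_space_def by auto
  then have "controllable_sys (extremal_A r p) (extremal_B r p) (r + p) m"
    using witness(1,2) unfolding controllable_sys_def controllable_seq_def by blast
  moreover have "?L \<le> length \<pi>"
    if "word m \<pi>" "controllable_seq (extremal_A r p) (extremal_B r p) (r + p) \<pi>" for \<pi>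
  proof -
    have "2 * potential r p (active r p (rev \<pi>)) = 2 * ?L"
      using potential_eq_if_full controllable_seq_extremal_iff[OF assms(1)] that(2) two_L by simp
    then show ?thesis
      using potential_active_le_length[OF assms(1), of p "rev \<pi>"] by simp
  qed
  ultimately show ?thesis
    unfolding shortest_ctrl_len_def using witness by blast
qed

corollary exists_system_with_shortest_ctrl_len:
  assumes "1 \<le> n" "1 \<le> m"
  shows "\<exists>A B. sys_ok n m A B \<and> controllable_sys A B n m
    \<and> shortest_ctrl_len A B n m (n + min m n * (min m n - 1) div 2)"
proof -
  define p where "p = min m n - 1"
  define r where "r = n - p"
  have r: "1 \<le> r" "p < m" "r + p = n"
    using assms unfolding p_def r_def by auto
  have "p * (p + 1) = min m n * (min m n - 1)"
    using assms unfolding p_def by (cases "min m n") auto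
  then have "r + p + p * (p + 1) div 2 = n + min m n * (min m n - 1) div 2"
    using r(3) by simp
  then show ?thesis
    using sys_ok_extremal[OF r(1,2)] shortest_ctrl_len_extremal[OF r(1,2)] unfolding r(3) by metis
qed

theorem theorem2:
  shows "(\<forall>n m A B. sys_ok n m A B \<and> controllable_sys A B n m \<longrightarrow>
            (\<exists>\<pi>. word m \<pi> \<and> controllable_seq A B n \<pi> \<and> 2 * length \<pi> \<le> n * (n + 1)))
       \<and> (\<forall>n m. n \<ge> 1 \<and> m \<ge> 1 \<longrightarrow>
            (\<exists>A B. sys_ok n m A B \<and> controllable_sys A B n m \<and>
               (m \<le> n \<longrightarrow> shortest_ctrl_len A B n m (n + m * (m - 1) div 2)) \<and>
               (m > n \<longrightarrow> shortest_ctrl_len A B n m (n * (n + 1) div 2))))"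
proof (intro conjI allI impI)
  fix n m A B
  assume "sys_ok n m A B \<and> controllable_sys A B n m"
  then show "\<exists>\<pi>. word m \<pi> \<and> controllable_seq A B n \<pi> \<and> 2 * length \<pi> \<le> n * (n + 1)"
    using exists_short_controllable_seq by blast
next
  fix n m :: nat
  assume "n \<ge> 1 \<and> m \<ge> 1"
  then obtain A B where AB: "sys_ok n m A B" "controllable_sys A B n m"
    "shortest_ctrl_len A B n m (n + min m n * (min m n - 1) div 2)"
    using exists_system_with_shortest_ctrl_len by blast
  have "n + n * (n - 1) div 2 = n * (n + 1) div 2"
    by (cases n) (auto simp: algebra_simps)
  then show "\<exists>A B. sys_ok n m A B \<and> controllable_sys A B n m \<and>
          (m \<le> n \<longrightarrow> shortest_ctrl_len A B n m (n + m * (m - 1) div 2)) \<and>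
          (m > n \<longrightarrow> shortest_ctrl_len A B n m (n * (n + 1) div 2))"
    using AB by (intro exI[of _ A] exI[of _ B]) (auto simp: min_def)
qed

end
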